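(* Let $Q$ be a finite commutative A-loop of odd order, and define $x\circ y = \big(x^{-1}\backslash (xy^2)\big)^{1/2}$. A subloop $K$ of $(Q,\circ)$ is a subloop of $Q$ if and only if $K\varphi = K$ for each $\varphi\in \mathrm{Inn}(Q)\cap\langle L_x : x\in K\rangle$.
   Context: A loop is a set with a binary operation and neutral element $1$ in which all left translations $L_x:y\mapsto xy$ and right translations are bijections; $\mathrm{Mlt}(Q)$ is the group they generate and $\mathrm{Inn}(Q)$ the stabilizer of $1$ in it. A commutative A-loop is a commutative loop all of whose inner mappings are automorphisms. $x\backslash y$ is the unique $z$ with $xz=y$, $x^{-1}=x\backslash 1$. In a finite commutative loop of odd order the squaring map is a bijection, and $z^{1/2}$ denotes the unique $w$ with $w^2=z$; $(Q,\circ)$ is then a loop. $\langle L_x : x\in K\rangle$ is the subgroup of $\mathrm{Mlt}(Q)$ generated by the left translations of $Q$ by elements of $K$. *)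

theory Defs
  imports Main
begin

definition loop :: "'a set \<Rightarrow> ('a \<Rightarrow> 'a \<Rightarrow> 'a) \<Rightarrow> 'a \<Rightarrow> bool" where
  "loop Q m e \<longleftrightarrow> e \<in> Q \<and> (\<forall>x\<in>Q. \<forall>y\<in>Q. m x y \<in> Q)
     \<and> (\<forall>x\<in>Q. m e x = x \<and> m x e = x)
     \<and> (\<forall>x\<in>Q. bij_betw (m x) Q Q \<and> bij_betw (\<lambda>y. m y x) Q Q)"

definition subloop :: "'a set \<Rightarrow> ('a \<Rightarrow> 'a \<Rightarrow> 'a) \<Rightarrow> 'a \<Rightarrow> 'a set \<Rightarrow> bool" where
  "subloop Q m e K \<longleftrightarrow> K \<subseteq> Q \<and> loop K m e"

text \<open>Permutations of Q are represented as functions that are bijective on Q and the identity off Q.\<close>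
definition Ltr :: "'a set \<Rightarrow> ('a \<Rightarrow> 'a \<Rightarrow> 'a) \<Rightarrow> 'a \<Rightarrow> 'a \<Rightarrow> 'a" where
  "Ltr Q m x = (\<lambda>y. if y \<in> Q then m x y else y)"

definition Rtr :: "'a set \<Rightarrow> ('a \<Rightarrow> 'a \<Rightarrow> 'a) \<Rightarrow> 'a \<Rightarrow> 'a \<Rightarrow> 'a" where
  "Rtr Q m x = (\<lambda>y. if y \<in> Q then m y x else y)"

definition pinv :: "'a set \<Rightarrow> ('a \<Rightarrow> 'a) \<Rightarrow> 'a \<Rightarrow> 'a" where
  "pinv Q f = (\<lambda>y. if y \<in> Q then the_inv_into Q f y else y)"

inductive_set gen_perm :: "'a set \<Rightarrow> ('a \<Rightarrow> 'a) set \<Rightarrow> ('a \<Rightarrow> 'a) set"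
  for Q :: "'a set" and S :: "('a \<Rightarrow> 'a) set" where
  gen_id: "id \<in> gen_perm Q S"
| gen_mult: "f \<in> S \<Longrightarrow> g \<in> gen_perm Q S \<Longrightarrow> f \<circ> g \<in> gen_perm Q S"
| gen_inv: "f \<in> S \<Longrightarrow> g \<in> gen_perm Q S \<Longrightarrow> pinv Q f \<circ> g \<in> gen_perm Q S"

definition Mlt :: "'a set \<Rightarrow> ('a \<Rightarrow> 'a \<Rightarrow> 'a) \<Rightarrow> ('a \<Rightarrow> 'a) set" where
  "Mlt Q m = gen_perm Q ((Ltr Q m ` Q) \<union> (Rtr Q m ` Q))"

definition Inn :: "'a set \<Rightarrow> ('a \<Rightarrow> 'a \<Rightarrow> 'a) \<Rightarrow> 'a \<Rightarrow> ('a \<Rightarrow> 'a) set" where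
  "Inn Q m e = {\<phi> \<in> Mlt Q m. \<phi> e = e}"

definition automorphism :: "'a set \<Rightarrow> ('a \<Rightarrow> 'a \<Rightarrow> 'a) \<Rightarrow> ('a \<Rightarrow> 'a) \<Rightarrow> bool" where
  "automorphism Q m \<phi> \<longleftrightarrow> bij_betw \<phi> Q Q \<and> (\<forall>x\<in>Q. \<forall>y\<in>Q. \<phi> (m x y) = m (\<phi> x) (\<phi> y))"

definition comm_A_loop :: "'a set \<Rightarrow> ('a \<Rightarrow> 'a \<Rightarrow> 'a) \<Rightarrow> 'a \<Rightarrow> bool" where
  "comm_A_loop Q m e \<longleftrightarrow> loop Q m e \<and> (\<forall>x\<in>Q. \<forall>y\<in>Q. m x y = m y x)
     \<and> (\<forall>\<phi>\<in>Inn Q m e. automorphism Q m \<phi>)"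

definition ldiv :: "'a set \<Rightarrow> ('a \<Rightarrow> 'a \<Rightarrow> 'a) \<Rightarrow> 'a \<Rightarrow> 'a \<Rightarrow> 'a" where
  "ldiv Q m x y = (THE z. z \<in> Q \<and> m x z = y)"

definition linv :: "'a set \<Rightarrow> ('a \<Rightarrow> 'a \<Rightarrow> 'a) \<Rightarrow> 'a \<Rightarrow> 'a \<Rightarrow> 'a" where
  "linv Q m e x = ldiv Q m x e"

definition sqroot :: "'a set \<Rightarrow> ('a \<Rightarrow> 'a \<Rightarrow> 'a) \<Rightarrow> 'a \<Rightarrow> 'a" where
  "sqroot Q m z = (THE w. w \<in> Q \<and> m w w = z)"

definition circ_op :: "'a set \<Rightarrow> ('a \<Rightarrow> 'a \<Rightarrow> 'a) \<Rightarrow> 'a \<Rightarrow> 'a \<Rightarrow> 'a \<Rightarrow> 'a" where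
  "circ_op Q m e x y = sqroot Q m (ldiv Q m (linv Q m e x) (m x (m y y)))"

end

theory Submission
  imports Defs
begin

text \<open>In a finite commutative loop of odd order squaring is a bijection: an element z without a
  square root would make x \<mapsto> x\z a fixed-point-free involution. A commutative A-loop is
  power-associative, hence x \<circ> x = x^2 and the \<circ>-inverse of x is x^-1. So a subloop K of (Q,\<circ>)
  is closed under squares and inverses, and since (x \<circ> w)^2 = x^-1\(x w^2), the map
  y \<mapsto> x^-1\(x y) permutes K. If K is invariant under the inner mappings L_(x^-1) L_x and
  L_(y^2)^-1 L_y L_y, this yields y (y k) \<in> K and y^2 k \<in> K for y, k \<in> K; as every element of K
  is a square, K is closed under multiplication. Conversely, every permutation generated by left
  translations by elements of a subloop K maps K onto itself.\<close>

lemma even_card_if_fixpoint_free_involution: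
  assumes "finite S"
    and "\<And>y. y \<in> S \<Longrightarrow> r y \<in> S"
    and "\<And>y. y \<in> S \<Longrightarrow> r (r y) = y"
    and "\<And>y. y \<in> S \<Longrightarrow> r y \<noteq> y"
  shows "even (card S)"
  using assms
proof (induction S rule: finite_psubset_induct)
  case (psubset S)
  show ?case
  proof (cases "S = {}")
    case False
    then obtain y where y: "y \<in> S" by blast
    define S' where "S' = S - {y, r y}"
    have "r z \<in> S'" if "z \<in> S'" for z
    proof -
      have z: "z \<in> S" "z \<noteq> y" "z \<noteq> r y" using that by (auto simp: S'_def)
      have "r z \<noteq> y" using psubset.prems(2)[OF z(1)] z(3) by auto
      moreover have "r z \<noteq> r y" using psubset.prems(2) z(1,2) y by metis
      ultimately show ?thesis using psubset.prems(1)[OF z(1)] by (simp add: S'_def)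
    qed
    then have "even (card S')"
      using psubset.IH[of S'] psubset.prems y by (auto simp: S'_def)
    moreover have "card S = card S' + 2"
    proof -
      have "{y, r y} \<subseteq> S" and "card {y, r y} = 2"
        using y psubset.prems(1) psubset.prems(3)[OF y] by auto
      then show ?thesis
        using psubset.hyps card_mono[of S "{y, r y}"] by (simp add: S'_def card_Diff_subset)
    qed
    ultimately show ?thesis by simp
  qed simp
qed

lemma gen_perm_comp: "f \<in> gen_perm Q S \<Longrightarrow> g \<in> gen_perm Q S \<Longrightarrow> f \<circ> g \<in> gen_perm Q S"
  by (induction rule: gen_perm.induct) (auto simp: comp_assoc intro: gen_perm.intros)

lemma gen_perm_generator: "f \<in> S \<Longrightarrow> f \<in> gen_perm Q S"
  using gen_perm.gen_mult[OF _ gen_perm.gen_id] by simp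

lemma gen_perm_pinv_generator: "f \<in> S \<Longrightarrow> pinv Q f \<in> gen_perm Q S"
  using gen_perm.gen_inv[OF _ gen_perm.gen_id] by simp

lemma gen_perm_funpow: "f \<in> S \<Longrightarrow> f ^^ n \<in> gen_perm Q S"
  by (induction n) (auto intro: gen_perm.intros)

lemma gen_perm_mono:
  assumes "S \<subseteq> S'"
  shows "gen_perm Q S \<subseteq> gen_perm Q S'"
proof
  fix f assume "f \<in> gen_perm Q S"
  then show "f \<in> gen_perm Q S'"
    by induction (use assms in \<open>blast intro: gen_perm.intros\<close>)+
qed

lemma gen_perm_image_eq:
  assumes "\<And>f. f \<in> S \<Longrightarrow> f ` K = K" and "\<And>f. f \<in> S \<Longrightarrow> pinv Q f ` K = K"
    and "\<phi> \<in> gen_perm Q S"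
  shows "\<phi> ` K = K"
  using assms(3) by induction (simp, simp_all only: image_comp[symmetric] assms(1,2))

lemma pinv_image_eq:
  assumes "bij_betw f Q Q" and "K \<subseteq> Q" and "f ` K = K"
  shows "pinv Q f ` K = K"
proof -
  have "pinv Q f ` K = the_inv_into Q f ` f ` K"
    using assms(2,3) by (auto simp: pinv_def)
  also have "\<dots> = K"
    using assms(1,2) by (force simp: bij_betw_def the_inv_into_f_f)
  finally show ?thesis .
qed

lemma Ltr_apply: "z \<in> Q \<Longrightarrow> Ltr Q m a z = m a z"
  by (simp add: Ltr_def)

primrec lpow :: "('a \<Rightarrow> 'a \<Rightarrow> 'a) \<Rightarrow> 'a \<Rightarrow> 'a \<Rightarrow> nat \<Rightarrow> 'a" where
  "lpow m e y 0 = e"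
| "lpow m e y (Suc n) = m y (lpow m e y n)"

locale loop_on =
  fixes Q :: "'a set" and m :: "'a \<Rightarrow> 'a \<Rightarrow> 'a" and e :: 'a
  assumes loop: "loop Q m e"
begin

lemma unit_in: "e \<in> Q"
  using loop by (simp add: loop_def)

lemma mult_in: "x \<in> Q \<Longrightarrow> y \<in> Q \<Longrightarrow> m x y \<in> Q"
  using loop by (simp add: loop_def)

lemma mult_unit_left: "x \<in> Q \<Longrightarrow> m e x = x"
  using loop by (simp add: loop_def)

lemma mult_unit_right: "x \<in> Q \<Longrightarrow> m x e = x"
  using loop by (simp add: loop_def)

lemma bij_betw_mult_left: "x \<in> Q \<Longrightarrow> bij_betw (m x) Q Q"
  using loop by (simp add: loop_def)

lemma mult_left_cancel: "x \<in> Q \<Longrightarrow> y \<in> Q \<Longrightarrow> z \<in> Q \<Longrightarrow> m x y = m x z \<Longrightarrow> y = z"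
  using bij_betw_mult_left[of x] by (auto simp: bij_betw_def inj_on_def)

lemma mult_right_cancel:
  assumes "x \<in> Q" and "y \<in> Q" and "z \<in> Q" and "m y x = m z x"
  shows "y = z"
proof -
  have "inj_on (\<lambda>y. m y x) Q"
    using loop assms(1) by (simp add: loop_def bij_betw_def)
  then show ?thesis
    using assms(2-) by (auto dest: inj_onD)
qed

lemma ldiv_eqI: "x \<in> Q \<Longrightarrow> z \<in> Q \<Longrightarrow> m x z = b \<Longrightarrow> ldiv Q m x b = z"
  unfolding ldiv_def by (rule the_equality) (use mult_left_cancel in blast)+

lemma ldiv_mult: "x \<in> Q \<Longrightarrow> z \<in> Q \<Longrightarrow> ldiv Q m x (m x z) = z"
  by (rule ldiv_eqI) auto

lemma
  assumes "x \<in> Q" and "b \<in> Q"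
  shows ldiv_in: "ldiv Q m x b \<in> Q" and mult_ldiv: "m x (ldiv Q m x b) = b"
proof -
  obtain z where "z \<in> Q" "m x z = b"
    using bij_betw_mult_left[OF assms(1)] assms(2) by (force simp: bij_betw_def)
  then show "ldiv Q m x b \<in> Q" "m x (ldiv Q m x b) = b"
    using ldiv_eqI assms(1) by auto
qed

lemma bij_betw_Ltr: "a \<in> Q \<Longrightarrow> bij_betw (Ltr Q m a) Q Q"
  using bij_betw_cong[of Q "Ltr Q m a" "m a" Q] bij_betw_mult_left by (simp add: Ltr_apply)

lemma pinv_Ltr_apply:
  assumes "a \<in> Q" and "z \<in> Q"
  shows "pinv Q (Ltr Q m a) z = ldiv Q m a z"
proof -
  have "the_inv_into Q (Ltr Q m a) z = ldiv Q m a z"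
    using assms bij_betw_Ltr[OF assms(1)]
    by (intro the_inv_into_f_eq) (auto simp: bij_betw_def Ltr_apply ldiv_in mult_ldiv)
  then show ?thesis
    using assms(2) by (simp add: pinv_def)
qed

lemma gen_perm_Ltr_subset_Mlt: "K \<subseteq> Q \<Longrightarrow> gen_perm Q (Ltr Q m ` K) \<subseteq> Mlt Q m"
  unfolding Mlt_def by (rule gen_perm_mono) blast

lemma subloop_gen_perm_Ltr_image_eq:
  assumes "subloop Q m e K" and "\<phi> \<in> gen_perm Q (Ltr Q m ` K)"
  shows "\<phi> ` K = K"
proof -
  have KQ: "K \<subseteq> Q" and "loop K m e"
    using assms(1) by (auto simp: subloop_def)
  have Ltr_K: "Ltr Q m a ` K = K" if "a \<in> K" for a
  proof -
    have "Ltr Q m a ` K = m a ` K"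
      using KQ by (intro image_cong) (auto simp: Ltr_apply)
    then show ?thesis
      using \<open>loop K m e\<close> that by (simp add: loop_def bij_betw_def)
  qed
  have pinv_Ltr_K: "pinv Q (Ltr Q m a) ` K = K" if "a \<in> K" for a
    using that KQ Ltr_K by (intro pinv_image_eq[OF bij_betw_Ltr]) auto
  show ?thesis
    by (rule gen_perm_image_eq[OF _ _ assms(2)]) (metis imageE Ltr_K pinv_Ltr_K)+
qed

lemma subloopI:
  assumes "finite K" and "K \<subseteq> Q" and "e \<in> K"
    and closed: "\<And>x y. x \<in> K \<Longrightarrow> y \<in> K \<Longrightarrow> m x y \<in> K"
  shows "subloop Q m e K"
proof -
  have "bij_betw f K K" if "f ` K \<subseteq> K" and "inj_on f K" for f
    using endo_inj_surj[OF assms(1) that] that(2) by (simp add: bij_betw_def)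
  moreover have "inj_on (m x) K" and "inj_on (\<lambda>y. m y x) K" if "x \<in> K" for x
    using that assms(2) by (intro inj_onI; meson mult_left_cancel mult_right_cancel subsetD)+
  ultimately have "bij_betw (m x) K K" and "bij_betw (\<lambda>y. m y x) K K" if "x \<in> K" for x
    using that closed by (simp_all add: image_subset_iff)
  then show ?thesis
    using assms mult_unit_left mult_unit_right by (auto simp: subloop_def loop_def)
qed

lemma lpow_in: "y \<in> Q \<Longrightarrow> lpow m e y n \<in> Q"
  by (induction n) (simp_all add: unit_in mult_in)

lemma Ltr_funpow_lpow: "y \<in> Q \<Longrightarrow> (Ltr Q m y ^^ n) (lpow m e y k) = lpow m e y (n + k)"
  by (induction n) (simp_all add: Ltr_apply lpow_in)

lemma automorphism_fixes_lpow:
  assumes "automorphism Q m \<phi>" and "\<phi> e = e" and "y \<in> Q" and "\<phi> y = y"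
  shows "\<phi> (lpow m e y k) = lpow m e y k"
  using assms lpow_in by (induction k) (simp_all add: automorphism_def)

end

locale comm_loop_on = loop_on +
  assumes commute: "x \<in> Q \<Longrightarrow> y \<in> Q \<Longrightarrow> m x y = m y x"
begin

lemma
  assumes "x \<in> Q"
  shows linv_in: "linv Q m e x \<in> Q" and mult_linv: "m x (linv Q m e x) = e"
  using assms unit_in by (simp_all add: linv_def ldiv_in mult_ldiv)

lemma linv_linv: "x \<in> Q \<Longrightarrow> linv Q m e (linv Q m e x) = x"
  unfolding linv_def[of _ _ _ "linv Q m e x"]
  by (rule ldiv_eqI) (simp_all add: linv_in mult_linv commute)

end

locale odd_comm_loop = comm_loop_on +
  assumes finite: "finite Q" and odd_card: "odd (card Q)"
begin

text \<open>If z had no square root, x \<mapsto> x\z would be a fixed-point-free involution of Q.\<close>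
lemma square_surj: "z \<in> Q \<Longrightarrow> \<exists>w\<in>Q. m w w = z"
proof (rule ccontr)
  assume z: "z \<in> Q" and no_root: "\<not> (\<exists>w\<in>Q. m w w = z)"
  have "ldiv Q m (ldiv Q m y z) z = y" if "y \<in> Q" for y
    using that z by (intro ldiv_eqI) (simp_all add: ldiv_in mult_ldiv commute)
  moreover have "ldiv Q m y z \<noteq> y" if "y \<in> Q" for y
    using that z no_root mult_ldiv by metis
  ultimately have "even (card Q)"
    using finite z by (intro even_card_if_fixpoint_free_involution[of Q "\<lambda>y. ldiv Q m y z"])
      (simp_all add: ldiv_in)
  then show False
    using odd_card by simp
qed

lemma inj_on_square: "inj_on (\<lambda>w. m w w) Q"
proof -
  have "(\<lambda>w. m w w) ` Q = Q"
    using square_surj mult_in by force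
  then show ?thesis
    by (simp add: inj_on_iff_eq_card finite)
qed

lemma sqroot_eqI: "w \<in> Q \<Longrightarrow> m w w = z \<Longrightarrow> sqroot Q m z = w"
  unfolding sqroot_def by (rule the_equality) (use inj_on_square in \<open>auto simp: inj_on_def\<close>)

lemma sqroot_square: "z \<in> Q \<Longrightarrow> m (sqroot Q m z) (sqroot Q m z) = z"
  using square_surj sqroot_eqI by metis

end

locale comm_A_loop_on = comm_loop_on +
  assumes inner_automorphism: "\<phi> \<in> Inn Q m e \<Longrightarrow> automorphism Q m \<phi>"
begin

text \<open>With a = y^n, the inner mapping L_a^-1 L_y^n fixes y and hence every power y^k;
  evaluating it at y^k gives y^n y^k = y^(n+k).\<close>
lemma lpow_add:
  assumes y: "y \<in> Q"
  shows "m (lpow m e y n) (lpow m e y k) = lpow m e y (n + k)"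
proof -
  define a where "a = lpow m e y n"
  define \<phi> where "\<phi> = pinv Q (Ltr Q m a) \<circ> (Ltr Q m y ^^ n)"
  have a: "a \<in> Q"
    using y by (simp add: a_def lpow_in)
  have \<phi>_lpow: "\<phi> (lpow m e y j) = ldiv Q m a (lpow m e y (n + j))" for j
    using a y by (simp add: \<phi>_def Ltr_funpow_lpow pinv_Ltr_apply lpow_in)
  have "\<phi> \<in> Mlt Q m"
    unfolding \<phi>_def Mlt_def using a y
    by (intro gen_perm_comp gen_perm_pinv_generator gen_perm_funpow) auto
  moreover have "\<phi> e = e"
  proof -
    have "\<phi> e = ldiv Q m a a"
      using \<phi>_lpow[of 0] by (simp add: a_def)
    also have "\<dots> = e"
      by (rule ldiv_eqI[OF a unit_in mult_unit_right[OF a]])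
    finally show ?thesis .
  qed
  ultimately have "automorphism Q m \<phi>"
    by (simp add: Inn_def inner_automorphism)
  moreover have "\<phi> y = y"
  proof -
    have "\<phi> y = ldiv Q m a (m y a)"
      using \<phi>_lpow[of 1] y by (simp add: mult_unit_right a_def)
    also have "\<dots> = y"
      using a y by (simp add: commute ldiv_mult)
    finally show ?thesis .
  qed
  ultimately have "ldiv Q m a (lpow m e y (n + k)) = lpow m e y k"
    using automorphism_fixes_lpow \<open>\<phi> e = e\<close> y \<phi>_lpow by metis
  then show ?thesis
    using a y mult_ldiv lpow_in unfolding a_def by metis
qed

end

locale odd_comm_A_loop = odd_comm_loop + comm_A_loop_on
begin

lemma lpow_period:
  assumes y: "y \<in> Q"
  shows "\<exists>N>0. lpow m e y N = e"
proof -
  have "\<not> inj (lpow m e y)"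
  proof
    assume "inj (lpow m e y)"
    moreover have "finite (range (lpow m e y))"
      using finite y lpow_in by (blast intro: finite_subset)
    ultimately show False
      using finite_imageD infinite_UNIV_nat by blast
  qed
  then obtain i j where ij: "i < j" "lpow m e y i = lpow m e y j"
    by (metis inj_def linorder_neq_iff)
  have "m (lpow m e y i) (lpow m e y (j - i)) = lpow m e y j"
    using lpow_add[OF y, of i "j - i"] ij(1) by simp
  also have "\<dots> = m (lpow m e y i) e"
    using ij(2) y by (simp add: lpow_in mult_unit_right)
  finally have "lpow m e y (j - i) = e"
    using y by (blast intro: mult_left_cancel lpow_in unit_in)
  then show ?thesis
    using ij by (intro exI[of _ "j - i"]) simp
qed

lemma linv_eq_lpow:
  assumes y: "y \<in> Q"
  shows "\<exists>N>0. lpow m e y N = e \<and> linv Q m e y = lpow m e y (N - 1)"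
proof -
  obtain N where N: "N > 0" "lpow m e y N = e"
    using lpow_period[OF y] by blast
  then have "m y (lpow m e y (N - 1)) = e"
    by (cases N) simp_all
  then have "linv Q m e y = lpow m e y (N - 1)"
    unfolding linv_def using y by (simp add: ldiv_eqI lpow_in)
  then show ?thesis
    using N by blast
qed

lemma linv_mult_lpow_Suc:
  assumes y: "y \<in> Q"
  shows "m (linv Q m e y) (lpow m e y (Suc k)) = lpow m e y k"
proof -
  obtain N where N: "N > 0" "lpow m e y N = e" "linv Q m e y = lpow m e y (N - 1)"
    using linv_eq_lpow[OF y] by blast
  have "N - 1 + Suc k = N + k"
    using N(1) by simp
  then have "m (linv Q m e y) (lpow m e y (Suc k)) = m (lpow m e y N) (lpow m e y k)"
    by (simp only: N(3) lpow_add[OF y])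
  also have "\<dots> = lpow m e y k"
    using N(2) y by (simp add: mult_unit_left lpow_in)
  finally show ?thesis .
qed

lemma mult_square_linv:
  assumes x: "x \<in> Q"
  shows "m x (m (linv Q m e x) (linv Q m e x)) = linv Q m e x"
proof -
  obtain N where N: "N > 0" "lpow m e x N = e" "linv Q m e x = lpow m e x (N - 1)"
    using linv_eq_lpow[OF x] by blast
  have "Suc (N - 1 + (N - 1)) = N + (N - 1)"
    using N(1) by simp
  then have "m x (m (linv Q m e x) (linv Q m e x)) = m (lpow m e x N) (lpow m e x (N - 1))"
    by (simp only: N(3) lpow_add[OF x] lpow.simps(2)[symmetric])
  also have "\<dots> = linv Q m e x"
    using N(2,3) x by (simp add: mult_unit_left lpow_in)
  finally show ?thesis .
qed

lemma circ_op_self: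
  assumes x: "x \<in> Q"
  shows "circ_op Q m e x x = m x x"
proof -
  have "lpow m e x 4 = m (m x x) (m x x)"
    using lpow_add[OF x, of 2 2] x by (simp add: numeral_eq_Suc mult_unit_right)
  moreover have "m (linv Q m e x) (lpow m e x 4) = m x (m x x)"
    using linv_mult_lpow_Suc[OF x, of 3] x by (simp add: numeral_eq_Suc mult_unit_right)
  ultimately have "ldiv Q m (linv Q m e x) (m x (m x x)) = m (m x x) (m x x)"
    using x by (metis ldiv_eqI linv_in lpow_in)
  then show ?thesis
    using x by (simp add: circ_op_def sqroot_eqI mult_in)
qed

lemma square_circ_op:
  assumes "x \<in> Q" and "y \<in> Q"
  shows "m (circ_op Q m e x y) (circ_op Q m e x y) = ldiv Q m (linv Q m e x) (m x (m y y))"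
  using assms by (simp add: circ_op_def sqroot_square ldiv_in linv_in mult_in)

lemma circ_op_eq_unit_imp_linv:
  assumes x: "x \<in> Q" and z: "z \<in> Q" and "circ_op Q m e x z = e"
  shows "z = linv Q m e x"
proof -
  have "ldiv Q m (linv Q m e x) (m x (m z z)) = e"
    using square_circ_op[OF x z] assms(3) x by (simp add: mult_unit_left unit_in)
  then have "m x (m z z) = m x (m (linv Q m e x) (linv Q m e x))"
    using x z by (metis mult_ldiv mult_square_linv linv_in mult_in mult_unit_right)
  then have "m z z = m (linv Q m e x) (linv Q m e x)"
    using x z by (blast intro: mult_left_cancel linv_in mult_in)
  then show ?thesis
    using inj_on_square x z by (auto simp: inj_on_def linv_in)
qed

context
  fixes K :: "'a set"
  assumes circ_subloop: "subloop Q (circ_op Q m e) e K"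
begin

lemma K_subset: "K \<subseteq> Q"
  using circ_subloop by (simp add: subloop_def)

lemma finite_K: "finite K"
  using finite K_subset by (rule finite_subset[rotated])

lemma unit_in_K: "e \<in> K"
  using circ_subloop by (simp add: subloop_def loop_def)

lemma circ_op_in_K: "x \<in> K \<Longrightarrow> y \<in> K \<Longrightarrow> circ_op Q m e x y \<in> K"
  using circ_subloop by (simp add: subloop_def loop_def)

lemma circ_op_image_K: "x \<in> K \<Longrightarrow> circ_op Q m e x ` K = K"
  using circ_subloop by (simp add: subloop_def loop_def bij_betw_def)

lemma square_in_K: "x \<in> K \<Longrightarrow> m x x \<in> K"
  using circ_op_in_K circ_op_self K_subset by (metis subsetD)

lemma square_image_K: "(\<lambda>w. m w w) ` K = K"
  by (rule endo_inj_surj[OF finite_K]) (use square_in_K inj_on_subset[OF inj_on_square K_subset] in auto)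

lemma linv_in_K:
  assumes x: "x \<in> K"
  shows "linv Q m e x \<in> K"
proof -
  obtain z where "z \<in> K" "circ_op Q m e x z = e"
    using circ_op_image_K[OF x] unit_in_K by (metis imageE)
  then show ?thesis
    using circ_op_eq_unit_imp_linv x K_subset by blast
qed

lemma ldiv_linv_mult_in_K:
  assumes x: "x \<in> K" and y: "y \<in> K"
  shows "ldiv Q m (linv Q m e x) (m x y) \<in> K"
proof -
  obtain w where w: "w \<in> K" "y = m w w"
    using square_image_K y by blast
  moreover have "x \<in> Q" and "w \<in> Q"
    using x w(1) K_subset by auto
  ultimately have "ldiv Q m (linv Q m e x) (m x y) = m (circ_op Q m e x w) (circ_op Q m e x w)"
    by (simp add: square_circ_op)
  then show ?thesis
    using square_in_K circ_op_in_K x w(1) by simp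
qed

lemma ldiv_linv_mult_image_K:
  assumes x: "x \<in> K"
  shows "(\<lambda>y. ldiv Q m (linv Q m e x) (m x y)) ` K = K"
proof (rule endo_inj_surj[OF finite_K])
  show "(\<lambda>y. ldiv Q m (linv Q m e x) (m x y)) ` K \<subseteq> K"
    using ldiv_linv_mult_in_K x by blast
  have xQ: "x \<in> Q" and iQ: "linv Q m e x \<in> Q"
    using x K_subset linv_in by auto
  show "inj_on (\<lambda>y. ldiv Q m (linv Q m e x) (m x y)) K"
  proof (rule inj_onI)
    fix y1 y2
    assume "y1 \<in> K" "y2 \<in> K"
      and eq: "ldiv Q m (linv Q m e x) (m x y1) = ldiv Q m (linv Q m e x) (m x y2)"
    then have y1: "y1 \<in> Q" and y2: "y2 \<in> Q"
      using K_subset by auto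
    have "m x y1 = m (linv Q m e x) (ldiv Q m (linv Q m e x) (m x y1))"
      using xQ iQ y1 by (simp add: mult_ldiv mult_in)
    also have "\<dots> = m x y2"
      using xQ iQ y2 eq by (simp add: mult_ldiv mult_in)
    finally show "y1 = y2"
      by (rule mult_left_cancel[OF xQ y1 y2])
  qed
qed

context
  assumes invariant: "\<And>\<phi>. \<phi> \<in> Inn Q m e \<inter> gen_perm Q (Ltr Q m ` K) \<Longrightarrow> \<phi> ` K = K"
begin

lemma invariant_if_fixes_unit: "\<phi> \<in> gen_perm Q (Ltr Q m ` K) \<Longrightarrow> \<phi> e = e \<Longrightarrow> \<phi> ` K = K"
  by (rule invariant) (use gen_perm_Ltr_subset_Mlt[OF K_subset] in \<open>auto simp: Inn_def\<close>)

text \<open>Write k = x^-1\(x u) with u \<in> K; the inner mapping L_(x^-1) L_x sends u to x^-1 (x^-1 k).\<close>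
lemma linv_mult_linv_mult_in_K:
  assumes x: "x \<in> K" and k: "k \<in> K"
  shows "m (linv Q m e x) (m (linv Q m e x) k) \<in> K"
proof -
  let ?i = "linv Q m e x"
  define T where "T = Ltr Q m ?i \<circ> Ltr Q m x"
  have xQ: "x \<in> Q" and iQ: "?i \<in> Q"
    using x K_subset linv_in by auto
  have T_apply: "T u = m ?i (m x u)" if "u \<in> Q" for u
    using that xQ by (simp add: T_def Ltr_apply mult_in)
  have "T ` K = K"
  proof (rule invariant_if_fixes_unit)
    show "T \<in> gen_perm Q (Ltr Q m ` K)"
      unfolding T_def using x linv_in_K[OF x] by (intro gen_perm_comp gen_perm_generator) auto
    show "T e = e"
      using T_apply[OF unit_in] xQ iQ by (simp add: mult_unit_right commute mult_linv)
  qed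
  obtain u where u: "u \<in> K" "k = ldiv Q m ?i (m x u)"
    using ldiv_linv_mult_image_K[OF x] k by blast
  moreover have uQ: "u \<in> Q"
    using u(1) K_subset by auto
  ultimately have "T u = m ?i (m ?i k)"
    using T_apply[OF uQ] mult_ldiv[OF iQ mult_in[OF xQ uQ]] by simp
  then show ?thesis
    using imageI[OF u(1), of T] \<open>T ` K = K\<close> by simp
qed

lemma mult_mult_in_K:
  assumes y: "y \<in> K" and k: "k \<in> K"
  shows "m y (m y k) \<in> K"
proof -
  have "linv Q m e (linv Q m e y) = y"
    using y K_subset by (auto intro: linv_linv)
  then show ?thesis
    using linv_mult_linv_mult_in_K[OF linv_in_K[OF y] k] by simp
qed

lemma square_mult_in_K:
  assumes y: "y \<in> K" and k: "k \<in> K"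
  shows "m (m y y) k \<in> K"
proof -
  define \<phi> where "\<phi> = pinv Q (Ltr Q m (m y y)) \<circ> Ltr Q m y \<circ> Ltr Q m y"
  have yQ: "y \<in> Q" and yyQ: "m y y \<in> Q"
    using y K_subset mult_in by auto
  have \<phi>_apply: "\<phi> u = ldiv Q m (m y y) (m y (m y u))" if "u \<in> Q" for u
    using that yQ yyQ by (simp add: \<phi>_def Ltr_apply pinv_Ltr_apply mult_in)
  have "\<phi> ` K = K"
  proof (rule invariant_if_fixes_unit)
    show "\<phi> \<in> gen_perm Q (Ltr Q m ` K)"
      unfolding \<phi>_def using y square_in_K[OF y]
      by (intro gen_perm_comp gen_perm_generator gen_perm_pinv_generator) auto
    show "\<phi> e = e"
      using \<phi>_apply[OF unit_in] yQ yyQ by (simp add: mult_unit_right ldiv_eqI unit_in)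
  qed
  then obtain u where u: "u \<in> K" "k = \<phi> u"
    using k by (metis imageE)
  moreover have uQ: "u \<in> Q"
    using u(1) K_subset by auto
  ultimately have "m (m y y) k = m y (m y u)"
    using \<phi>_apply[OF uQ] mult_ldiv[OF yyQ mult_in[OF yQ mult_in[OF yQ uQ]]] by simp
  then show ?thesis
    using mult_mult_in_K y u(1) by simp
qed

lemma mult_in_K:
  assumes x: "x \<in> K" and y: "y \<in> K"
  shows "m x y \<in> K"
proof -
  obtain w where "w \<in> K" "x = m w w"
    using square_image_K x by blast
  then show ?thesis
    using square_mult_in_K y by simp
qed

lemma subloop_if_invariant: "subloop Q m e K"
  using finite_K K_subset unit_in_K mult_in_K by (rule subloopI)

end

end

end

theorem lemma3p9:
  fixes Q :: "'a set" and m :: "'a \<Rightarrow> 'a \<Rightarrow> 'a" and e :: 'a and K :: "'a set"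
  assumes "comm_A_loop Q m e"
    and "finite Q" and "odd (card Q)"
    and "subloop Q (circ_op Q m e) e K"
  shows "subloop Q m e K \<longleftrightarrow>
    (\<forall>\<phi> \<in> Inn Q m e \<inter> gen_perm Q (Ltr Q m ` K). \<phi> ` K = K)"
proof -
  interpret odd_comm_A_loop Q m e
    using assms(1-3) by unfold_locales (auto simp: comm_A_loop_def)
  show ?thesis
  proof
    assume "subloop Q m e K"
    then show "\<forall>\<phi> \<in> Inn Q m e \<inter> gen_perm Q (Ltr Q m ` K). \<phi> ` K = K"
      using subloop_gen_perm_Ltr_image_eq by blast
  next
    assume "\<forall>\<phi> \<in> Inn Q m e \<inter> gen_perm Q (Ltr Q m ` K). \<phi> ` K = K"
    then show "subloop Q m e K"
      using subloop_if_invariant[OF assms(4)] by blast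
  qed
qed

end
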